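(* Let $x$, $y$, $z$ be non-zero octonions, and define \[ [x,y,z] = \bigl(z^{-1}(y^{-1}x^{-1})\bigr)\bigl(x(yz)\bigr). \] Then \[ \bigl((xy)z\bigr)[x,y,z] = x(yz) \qquad\text{and}\qquad (xy)z = \bigl(x(yz)\bigr)\,\overline{[x,y,z]}, \] where $\overline{q}$ denotes the octonion conjugate of $q$.
   Context: Octonion multiplication is non-associative and non-commutative. Every non-zero octonion $q$ has a multiplicative inverse $q^{-1}$, satisfying $q q^{-1} = q^{-1} q = 1$. In each product above, the parentheses indicate the order of evaluation. *)

theory Defs
  imports Main "HOL.Real"
begin

text \<open>Quaternions as 4-tuples of reals (Hamilton product), used as building
blocks for the octonions via the Cayley-Dickson construction.\<close>

datatype quat = Quat real real real real

fun qadd :: "quat \<Rightarrow> quat \<Rightarrow> quat" where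
  "qadd (Quat a1 b1 c1 d1) (Quat a2 b2 c2 d2) = Quat (a1+a2) (b1+b2) (c1+c2) (d1+d2)"

fun qneg :: "quat \<Rightarrow> quat" where
  "qneg (Quat a b c d) = Quat (-a) (-b) (-c) (-d)"

fun qmul :: "quat \<Rightarrow> quat \<Rightarrow> quat" where
  "qmul (Quat a1 b1 c1 d1) (Quat a2 b2 c2 d2) =
     Quat (a1*a2 - b1*b2 - c1*c2 - d1*d2)
          (a1*b2 + b1*a2 + c1*d2 - d1*c2)
          (a1*c2 - b1*d2 + c1*a2 + d1*b2)
          (a1*d2 + b1*c2 - c1*b2 + d1*a2)"

fun qcnj :: "quat \<Rightarrow> quat" where
  "qcnj (Quat a b c d) = Quat a (-b) (-c) (-d)"

fun qscale :: "real \<Rightarrow> quat \<Rightarrow> quat" where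
  "qscale r (Quat a b c d) = Quat (r*a) (r*b) (r*c) (r*d)"

fun qnormsq :: "quat \<Rightarrow> real" where
  "qnormsq (Quat a b c d) = a^2 + b^2 + c^2 + d^2"

text \<open>Octonions as pairs of quaternions (Cayley-Dickson):
  (a,b)(c,d) = (ac - conj(d) b, d a + b conj(c)),  conj (a,b) = (conj a, -b).\<close>

datatype octo = Oct quat quat

fun octo_cnj :: "octo \<Rightarrow> octo" where
  "octo_cnj (Oct a b) = Oct (qcnj a) (qneg b)"

fun octo_normsq :: "octo \<Rightarrow> real" where
  "octo_normsq (Oct a b) = qnormsq a + qnormsq b"

fun octo_scale :: "real \<Rightarrow> octo \<Rightarrow> octo" where
  "octo_scale r (Oct a b) = Oct (qscale r a) (qscale r b)"

instantiation octo :: "{zero, one, times, inverse}"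
begin

definition zero_octo :: octo where
  "zero_octo = Oct (Quat 0 0 0 0) (Quat 0 0 0 0)"

definition one_octo :: octo where
  "one_octo = Oct (Quat 1 0 0 0) (Quat 0 0 0 0)"

fun times_octo :: "octo \<Rightarrow> octo \<Rightarrow> octo" where
  "times_octo (Oct a b) (Oct c d) =
     Oct (qadd (qmul a c) (qneg (qmul (qcnj d) b)))
         (qadd (qmul d a) (qmul b (qcnj c)))"

text \<open>Multiplicative inverse: conj(x) / |x|^2 (and 0 for x = 0).\<close>
definition inverse_octo :: "octo \<Rightarrow> octo" where
  "inverse_octo x = octo_scale (inverse (octo_normsq x)) (octo_cnj x)"

definition divide_octo :: "octo \<Rightarrow> octo \<Rightarrow> octo" where
  "divide_octo x y = x * inverse y"

instance ..
end

definition octo_bracket :: "octo \<Rightarrow> octo \<Rightarrow> octo \<Rightarrow> octo" where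
  "octo_bracket x y z =
     (inverse z * (inverse y * inverse x)) * (x * (y * z))"

end

theory Submission imports Defs begin

text \<open>With \<open>w = (xy)z\<close> and \<open>u = x(yz)\<close>, the inverse is an anti-automorphism, so
  \<open>[x,y,z] = w\<^sup>-\<^sup>1 u\<close>. The octonions are alternative and the inverse is \<open>w\<^sup>-\<^sup>1 = w\<^sup>*/|w|\<^sup>2\<close>, so
  \<open>w (w\<^sup>-\<^sup>1 u) = u\<close>; and since the norm is multiplicative, \<open>|u| = |w|\<close>, whence
  \<open>u (w\<^sup>-\<^sup>1 u)\<^sup>* = u (u\<^sup>* w)/|w|\<^sup>2 = w\<close>.\<close>

lemma octo_cases:
  obtains a0 a1 a2 a3 a4 a5 a6 a7
  where "x = Oct (Quat a0 a1 a2 a3) (Quat a4 a5 a6 a7)"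
  by (metis octo.exhaust quat.exhaust)

lemma octo_cnj_mult: "octo_cnj (a * b) = octo_cnj b * octo_cnj a"
  by (cases a rule: octo_cases; cases b rule: octo_cases) (simp add: algebra_simps)

lemma octo_cnj_cnj [simp]: "octo_cnj (octo_cnj a) = a"
  by (cases a rule: octo_cases) simp

lemma octo_mult_cnj_mult: "a * (octo_cnj a * b) = octo_scale (octo_normsq a) b"
  by (cases a rule: octo_cases; cases b rule: octo_cases)
     (simp add: algebra_simps power2_eq_square)

lemma octo_normsq_mult: "octo_normsq (a * b) = octo_normsq a * octo_normsq b"
  by (cases a rule: octo_cases; cases b rule: octo_cases)
     (simp add: algebra_simps power2_eq_square)

lemma octo_normsq_eq_0_iff [simp]: "octo_normsq a = 0 \<longleftrightarrow> a = 0"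
  by (cases a rule: octo_cases) (auto simp: zero_octo_def add_nonneg_eq_0_iff)

lemma octo_mult_scale_right: "a * octo_scale r b = octo_scale r (a * b)"
  by (cases a rule: octo_cases; cases b rule: octo_cases) (simp add: algebra_simps)

lemma octo_mult_scale_left: "octo_scale r a * b = octo_scale r (a * b)"
  by (cases a rule: octo_cases; cases b rule: octo_cases) (simp add: algebra_simps)

lemma octo_cnj_scale: "octo_cnj (octo_scale r a) = octo_scale r (octo_cnj a)"
  by (cases a rule: octo_cases) simp

lemma octo_scale_scale: "octo_scale r (octo_scale s a) = octo_scale (r * s) a"
  by (cases a rule: octo_cases) (simp add: algebra_simps)

lemma octo_scale_one [simp]: "octo_scale 1 a = a"
  by (cases a rule: octo_cases) simp

lemma octo_inverse_mult: "inverse (a * b) = inverse b * (inverse a :: octo)"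
  unfolding inverse_octo_def octo_mult_scale_left octo_mult_scale_right octo_scale_scale
  by (simp add: octo_cnj_mult octo_normsq_mult mult.commute)

lemma octo_mult_inverse_mult:
  fixes a b :: octo
  assumes "a \<noteq> 0"
  shows "a * (inverse a * b) = b"
  using assms
  by (simp add: inverse_octo_def octo_mult_scale_left octo_mult_scale_right
      octo_mult_cnj_mult octo_scale_scale)

lemma octo_mult_cnj_inverse_mult:
  assumes "a \<noteq> 0" and "octo_normsq b = octo_normsq a"
  shows "b * octo_cnj (inverse a * b) = a"
  using assms
  by (simp add: inverse_octo_def octo_cnj_mult octo_cnj_scale octo_mult_scale_right
      octo_mult_cnj_mult octo_scale_scale)

theorem theorem1:
  fixes x y z :: octo
  assumes "x \<noteq> 0" and "y \<noteq> 0" and "z \<noteq> 0"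
  shows "((x * y) * z) * octo_bracket x y z = x * (y * z) \<and>
         (x * y) * z = (x * (y * z)) * octo_cnj (octo_bracket x y z)"
proof -
  define w where "w = (x * y) * z"
  define u where "u = x * (y * z)"
  have bracket: "octo_bracket x y z = inverse w * u"
    unfolding octo_bracket_def w_def u_def by (simp add: octo_inverse_mult)
  have "w \<noteq> 0"
    using assms unfolding w_def
    by (simp flip: octo_normsq_eq_0_iff add: octo_normsq_mult)
  moreover have "octo_normsq u = octo_normsq w"
    unfolding u_def w_def by (simp add: octo_normsq_mult)
  ultimately show ?thesis
    unfolding bracket
    by (simp flip: w_def u_def add: octo_mult_inverse_mult octo_mult_cnj_inverse_mult)
qed

end
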